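(* Let $p,l$ be integers with $2\le l<p/2$ and $\gcd(p,l)=1$, and let $\vec r:\mathbb{Z}\to\mathbb{R}^2$ be a nondegenerate discrete planar curve with constant centroaffine curvatures $\kappa_k=1$ and $\bar\kappa_k=2\cos\frac{2l\pi}{p}$ for all $k$. Then $\vec r$ is closed with period $p$ and is not simple (it has self-intersections).
   Context: A discrete planar curve is a map $\vec r:\mathbb{Z}\to\mathbb{R}^2$; write $\vec r_k=\vec r(k)$ and $\vec t_k=\vec r_{k+1}-\vec r_k$. $[\vec a,\vec b]$ denotes the $2\times2$ determinant. The curve is nondegenerate if $[\vec t_{k-1},\vec t_k]\ne0$ for all $k$. Its first and second centroaffine curvatures are $\kappa_k=\frac{[\vec t_k,\vec t_{k+1}]}{[\vec t_{k-1},\vec t_k]}$, $\bar\kappa_k=\frac{[\vec t_{k-1},\vec t_{k+1}]}{[\vec t_{k-1},\vec t_k]}$. Closed with period $p$: $\vec r(k+p)=\vec r(k)$ for all $k$, $p$ minimal. Extend $\vec r$ to $\mathbb{R}$ by linear interpolation on each $[k,k+1]$; a closed curve is simple if this map is injective on $[k,k+p)$. *)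

theory Defs
  imports "HOL-Analysis.Analysis"
begin

definition det2 :: "real \<times> real \<Rightarrow> real \<times> real \<Rightarrow> real" where
  "det2 a b = fst a * snd b - snd a * fst b"

definition tang :: "(int \<Rightarrow> real \<times> real) \<Rightarrow> int \<Rightarrow> real \<times> real" where
  "tang r k = r (k + 1) - r k"

definition nondegenerate :: "(int \<Rightarrow> real \<times> real) \<Rightarrow> bool" where
  "nondegenerate r \<longleftrightarrow> (\<forall>k. det2 (tang r (k - 1)) (tang r k) \<noteq> 0)"

definition kappa :: "(int \<Rightarrow> real \<times> real) \<Rightarrow> int \<Rightarrow> real" where
  "kappa r k = det2 (tang r k) (tang r (k + 1)) / det2 (tang r (k - 1)) (tang r k)"

definition kappa_bar :: "(int \<Rightarrow> real \<times> real) \<Rightarrow> int \<Rightarrow> real" where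
  "kappa_bar r k = det2 (tang r (k - 1)) (tang r (k + 1)) / det2 (tang r (k - 1)) (tang r k)"

definition closed_with_period :: "(int \<Rightarrow> real \<times> real) \<Rightarrow> int \<Rightarrow> bool" where
  "closed_with_period r p \<longleftrightarrow> p > 0 \<and> (\<forall>k. r (k + p) = r k) \<and>
     (\<forall>q. 0 < q \<and> q < p \<longrightarrow> \<not> (\<forall>k. r (k + q) = r k))"

definition interp :: "(int \<Rightarrow> real \<times> real) \<Rightarrow> real \<Rightarrow> real \<times> real" where
  "interp r s = (1 - (s - of_int \<lfloor>s\<rfloor>)) *\<^sub>R r \<lfloor>s\<rfloor> + (s - of_int \<lfloor>s\<rfloor>) *\<^sub>R r (\<lfloor>s\<rfloor> + 1)"

definition simple_closed :: "(int \<Rightarrow> real \<times> real) \<Rightarrow> int \<Rightarrow> bool" where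
  "simple_closed r p \<longleftrightarrow> closed_with_period r p \<and>
     (\<forall>k::int. inj_on (interp r) {of_int k ..< of_int (k + p)})"

end

theory Submission
  imports Defs
begin

text \<open>Curvatures \<open>kappa = 1\<close> and \<open>kappa_bar = 2 cos \<theta>\<close> say exactly that the tangent vectors obey
  \<open>t (k+1) = 2 cos \<theta> t k - t (k-1)\<close>. After moving the origin to a suitable centre the vertices
  obey the same Chebyshev recurrence, so \<open>r k = C + cos (k\<theta>) P + sin (k\<theta>) Q\<close> with \<open>P, Q\<close>
  independent: the curve is an affine image of the regular star polygon \<open>{p/l}\<close>. As
  \<open>\<theta> = 2\<pi>l/p\<close> with \<open>gcd p l = 1\<close>, its minimal period is \<open>p\<close>. Since \<open>l \<ge> 2\<close> the polygon winds
  around more than once, and an edge whose endpoints interleave with those of the first edge on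
  the ellipse must cross it.\<close>

definition ellipse_point :: "real \<times> real \<Rightarrow> real \<times> real \<Rightarrow> real \<Rightarrow> real \<times> real" where
  "ellipse_point P Q y = cos y *\<^sub>R P + sin y *\<^sub>R Q"

lemma ellipse_point_periodic: "ellipse_point P Q (y + 2 * pi * of_int n) = ellipse_point P Q y"
  by (simp add: ellipse_point_def cos_add sin_add)

lemma det2_linear_combinations:
  "det2 (a *\<^sub>R P + b *\<^sub>R Q) (a' *\<^sub>R P + b' *\<^sub>R Q) = (a * b' - b * a') * det2 P Q"
  by (simp add: det2_def algebra_simps)

lemma sin_chord_identity:
  fixes x y z :: real
  shows "(cos (2*y) - cos (2*x)) * (sin (2*z) - sin (2*x)) - (sin (2*y) - sin (2*x)) * (cos (2*z) - cos (2*x))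
     = 4 * sin (y - x) * sin (z - y) * sin (z - x)"
proof -
  have "sin x ^ 2 + cos x ^ 2 = 1" "sin y ^ 2 + cos y ^ 2 = 1" "sin z ^ 2 + cos z ^ 2 = 1"
    by simp_all
  then show ?thesis unfolding sin_double cos_double sin_diff by algebra
qed

lemma det2_ellipse_chords:
  "det2 (ellipse_point P Q b - ellipse_point P Q a) (ellipse_point P Q c - ellipse_point P Q a)
     = 4 * sin (b/2 - a/2) * sin (c/2 - b/2) * sin (c/2 - a/2) * det2 P Q"
proof -
  have "ellipse_point P Q v - ellipse_point P Q u = (cos v - cos u) *\<^sub>R P + (sin v - sin u) *\<^sub>R Q" for u v
    by (simp add: ellipse_point_def algebra_simps)
  then show ?thesis
    using sin_chord_identity[where x="a/2" and y="b/2" and z="c/2"] by (simp add: det2_linear_combinations)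
qed

lemma det2_ellipse_chords_sign:
  assumes "a < b" "b < c" "c < a + 2 * pi"
  shows "0 < det2 P Q * det2 (ellipse_point P Q b - ellipse_point P Q a) (ellipse_point P Q c - ellipse_point P Q a)
     \<longleftrightarrow> det2 P Q \<noteq> 0"
proof -
  have "0 < sin (b/2 - a/2)" "0 < sin (c/2 - b/2)" "0 < sin (c/2 - a/2)"
    using assms by (auto intro!: sin_gt_zero)
  then show ?thesis
    by (auto simp: det2_ellipse_chords zero_less_mult_iff mult_less_0_iff)
qed

text \<open>The crossing point of the lines \<open>AB\<close> and \<open>CD\<close> is found by Cramer's rule; its
  parameters on both segments are ratios of signed areas, which lie in \<open>(0,1)\<close> when the
  orientations agree.\<close>
lemma open_segments_meet:
  fixes A B C D :: "real \<times> real"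
  defines "a \<equiv> det2 (C - A) (B - A)" and "b \<equiv> det2 (B - A) (D - A)"
    and "c \<equiv> det2 (C - A) (D - A)" and "d \<equiv> det2 (B - C) (D - C)"
  assumes "0 < a * b" "0 < a * c" "0 < a * d"
  obtains t s where "0 < t" "t < 1" "0 < s" "s < 1"
    "(1 - t) *\<^sub>R A + t *\<^sub>R B = (1 - s) *\<^sub>R C + s *\<^sub>R D"
proof
  have cd: "c + d = a + b"
    unfolding a_def b_def c_def d_def det2_def by (simp add: algebra_simps)
  have "0 < a * a"
    using assms(5) by (auto simp: zero_less_mult_iff)
  then have ab: "0 < a * (a + b)"
    using assms(5) by (simp add: distrib_left)
  then have "a + b \<noteq> 0" by auto
  show "0 < c / (a + b)" "c / (a + b) < 1" "0 < a / (a + b)" "a / (a + b) < 1"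
    using assms(5-7) ab cd by (auto simp: divide_simps zero_less_mult_iff)
  show "(1 - c / (a + b)) *\<^sub>R A + (c / (a + b)) *\<^sub>R B = (1 - a / (a + b)) *\<^sub>R C + (a / (a + b)) *\<^sub>R D"
    using \<open>a + b \<noteq> 0\<close>
    by (simp add: prod_eq_iff a_def b_def c_def d_def det2_def field_simps)
qed

lemma ellipse_chords_cross:
  assumes "det2 P Q \<noteq> 0" "\<alpha> < \<gamma>" "\<gamma> < \<beta>" "\<beta> < \<delta>" "\<delta> < \<alpha> + 2 * pi"
  obtains t s where "0 < t" "t < 1" "0 < s" "s < 1"
    "(1 - t) *\<^sub>R ellipse_point P Q \<alpha> + t *\<^sub>R ellipse_point P Q \<beta>
       = (1 - s) *\<^sub>R ellipse_point P Q \<gamma> + s *\<^sub>R ellipse_point P Q \<delta>"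
proof (rule open_segments_meet)
  let ?E = "ellipse_point P Q"
  have "0 < det2 P Q * det2 (?E \<gamma> - ?E \<alpha>) (?E \<beta> - ?E \<alpha>)"
    "0 < det2 P Q * det2 (?E \<beta> - ?E \<alpha>) (?E \<delta> - ?E \<alpha>)"
    "0 < det2 P Q * det2 (?E \<gamma> - ?E \<alpha>) (?E \<delta> - ?E \<alpha>)"
    "0 < det2 P Q * det2 (?E \<beta> - ?E \<gamma>) (?E \<delta> - ?E \<gamma>)"
    using assms by (subst det2_ellipse_chords_sign; simp)+
  then show "0 < det2 (?E \<gamma> - ?E \<alpha>) (?E \<beta> - ?E \<alpha>) * det2 (?E \<beta> - ?E \<alpha>) (?E \<delta> - ?E \<alpha>)"
    "0 < det2 (?E \<gamma> - ?E \<alpha>) (?E \<beta> - ?E \<alpha>) * det2 (?E \<gamma> - ?E \<alpha>) (?E \<delta> - ?E \<alpha>)"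
    "0 < det2 (?E \<gamma> - ?E \<alpha>) (?E \<beta> - ?E \<alpha>) * det2 (?E \<beta> - ?E \<gamma>) (?E \<delta> - ?E \<gamma>)"
    by (auto simp: zero_less_mult_iff)
qed

lemma det2_decomposition: "det2 e f *\<^sub>R h = det2 h f *\<^sub>R e + det2 e h *\<^sub>R f"
  by (simp add: det2_def prod_eq_iff algebra_simps)

lemma tangent_recurrence:
  assumes "det2 (tang r (k - 1)) (tang r k) \<noteq> 0" "kappa r k = 1" "kappa_bar r k = c"
  shows "tang r (k + 1) = c *\<^sub>R tang r k - tang r (k - 1)"
proof -
  let ?e = "tang r (k - 1)" and ?f = "tang r k" and ?g = "tang r (k + 1)"
  have "det2 ?f ?g = det2 ?e ?f" "det2 ?e ?g = c * det2 ?e ?f"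
    using assms unfolding kappa_def kappa_bar_def by (simp_all add: field_simps)
  moreover have "det2 ?g ?f = - det2 ?f ?g"
    by (simp add: det2_def)
  ultimately have "det2 ?e ?f *\<^sub>R ?g = det2 ?e ?f *\<^sub>R (c *\<^sub>R ?f - ?e)"
    using det2_decomposition[of ?e ?f ?g] by (simp add: algebra_simps)
  then show ?thesis
    using assms(1) by simp
qed

lemma int_shift_invariant_const:
  assumes "\<And>k::int. g (k + 1) = g k"
  shows "g k = g 0"
proof (induct k rule: int_induct[where k = 0])
  case (step2 i)
  then show ?case
    using assms[of "i - 1"] by simp
qed (use assms in simp_all)

lemma linear_recurrence_unique:
  fixes v u :: "int \<Rightarrow> 'a::real_vector"
  assumes "\<And>k. v (k + 1) = c *\<^sub>R v k - v (k - 1)" "\<And>k. u (k + 1) = c *\<^sub>R u k - u (k - 1)"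
    and "v 0 = u 0" "v 1 = u 1"
  shows "v k = u k"
proof -
  have "v k = u k \<and> v (k + 1) = u (k + 1)"
  proof (induct k rule: int_induct[where k = 0])
    case base
    then show ?case using assms(3,4) by simp
  next
    case (step1 i)
    then show ?case using assms(1,2)[of "i + 1"] by (simp add: add.assoc)
  next
    case (step2 i)
    have "v (i - 1) = c *\<^sub>R v i - v (i + 1)" "u (i - 1) = c *\<^sub>R u i - u (i + 1)"
      using assms(1,2)[of i] by simp_all
    with step2 show ?case by simp
  qed
  then show ?thesis by simp
qed

lemma chebyshev_recurrence_closed_form:
  fixes v :: "int \<Rightarrow> 'a::real_vector"
  assumes "\<And>k. v (k + 1) = (2 * cos \<theta>) *\<^sub>R v k - v (k - 1)" "sin \<theta> \<noteq> 0"
  shows "v k = cos (of_int k * \<theta>) *\<^sub>R v 0 + sin (of_int k * \<theta>) *\<^sub>R ((1 / sin \<theta>) *\<^sub>R (v 1 - cos \<theta> *\<^sub>R v 0))"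
proof -
  define Q where "Q = (1 / sin \<theta>) *\<^sub>R (v 1 - cos \<theta> *\<^sub>R v 0)"
  have "v k = cos (of_int k * \<theta>) *\<^sub>R v 0 + sin (of_int k * \<theta>) *\<^sub>R Q"
  proof (rule linear_recurrence_unique[OF assms(1)])
    fix k :: int
    have c: "cos (of_int (k + 1) * \<theta>) = 2 * cos \<theta> * cos (of_int k * \<theta>) - cos (of_int (k - 1) * \<theta>)"
      by (simp add: distrib_right left_diff_distrib cos_add cos_diff)
    have s: "sin (of_int (k + 1) * \<theta>) = 2 * cos \<theta> * sin (of_int k * \<theta>) - sin (of_int (k - 1) * \<theta>)"
      by (simp add: distrib_right left_diff_distrib sin_add sin_diff)
    show "cos (of_int (k + 1) * \<theta>) *\<^sub>R v 0 + sin (of_int (k + 1) * \<theta>) *\<^sub>R Q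
      = (2 * cos \<theta>) *\<^sub>R (cos (of_int k * \<theta>) *\<^sub>R v 0 + sin (of_int k * \<theta>) *\<^sub>R Q)
        - (cos (of_int (k - 1) * \<theta>) *\<^sub>R v 0 + sin (of_int (k - 1) * \<theta>) *\<^sub>R Q)"
      unfolding c s by (simp add: algebra_simps)
  qed (use assms(2) in \<open>simp_all add: Q_def algebra_simps\<close>)
  then show ?thesis
    unfolding Q_def .
qed

text \<open>The second differences \<open>r (k+1) + r (k-1) - c r k\<close> are constant; shifting the origin to
  that constant divided by \<open>2 - c\<close> makes the recurrence homogeneous.\<close>
lemma tangent_recurrence_centre:
  assumes "\<And>k. tang r (k + 1) = c *\<^sub>R tang r k - tang r (k - 1)" "c \<noteq> 2"
  obtains C where "\<And>k. r (k + 1) - C = c *\<^sub>R (r k - C) - (r (k - 1) - C)"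
proof -
  define w where "w k = r (k + 1) + r (k - 1) - c *\<^sub>R r k" for k
  define C where "C = (1 / (2 - c)) *\<^sub>R w 0"
  have "w k = w 0" for k
  proof (rule int_shift_invariant_const)
    fix k :: int
    show "w (k + 1) = w k"
      using assms(1)[of k] unfolding w_def tang_def by (simp add: algebra_simps)
  qed
  moreover have "(2 - c) *\<^sub>R C = w 0"
    using assms(2) unfolding C_def by simp
  ultimately have "r (k + 1) + r (k - 1) - c *\<^sub>R r k = (2 - c) *\<^sub>R C" for k
    unfolding w_def by simp
  then show thesis
    by (intro that) (simp add: prod_eq_iff algebra_simps)
qed

lemma constant_curvatures_ellipse:
  assumes "nondegenerate r" "\<And>k. kappa r k = 1" "\<And>k. kappa_bar r k = 2 * cos \<theta>" "sin \<theta> \<noteq> 0"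
  obtains C P Q where "det2 P Q \<noteq> 0" "\<And>k. r k = C + ellipse_point P Q (of_int k * \<theta>)"
proof -
  have "tang r (k + 1) = (2 * cos \<theta>) *\<^sub>R tang r k - tang r (k - 1)" for k
    using assms(1-3) unfolding nondegenerate_def by (blast intro: tangent_recurrence)
  moreover have "2 * cos \<theta> \<noteq> 2"
    using assms(4) cos_one_sin_zero by auto
  ultimately obtain C where "r (k + 1) - C = (2 * cos \<theta>) *\<^sub>R (r k - C) - (r (k - 1) - C)" for k
    using tangent_recurrence_centre by metis
  from chebyshev_recurrence_closed_form[where v = "\<lambda>k. r k - C", OF this assms(4)]
  obtain P Q where rk: "r k = C + ellipse_point P Q (of_int k * \<theta>)" for k
    unfolding ellipse_point_def by (metis add.commute diff_eq_eq)
  have "det2 (tang r 0) (tang r 1) \<noteq> 0"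
    using assms(1) unfolding nondegenerate_def by (metis diff_self)
  moreover have "det2 (tang r 0) (tang r 1)
      = det2 (ellipse_point P Q \<theta> - ellipse_point P Q 0) (ellipse_point P Q (2 * \<theta>) - ellipse_point P Q 0)"
    unfolding tang_def rk by (simp add: det2_def algebra_simps)
  ultimately have "det2 P Q \<noteq> 0"
    by (auto simp: det2_ellipse_chords)
  then show thesis
    using rk by (rule that)
qed

lemma ellipse_point_eq_start:
  assumes "det2 P Q \<noteq> 0" "ellipse_point P Q y = ellipse_point P Q 0"
  shows "cos y = 1"
proof -
  have "det2 (ellipse_point P Q y - ellipse_point P Q 0) Q = (cos y - 1) * det2 P Q"
    by (simp add: ellipse_point_def det2_def algebra_simps)
  then show ?thesis
    using assms by (simp add: det2_def)
qed

lemma interp_of_int_add: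
  assumes "0 \<le> t" "t < 1"
  shows "interp r (of_int k + t) = (1 - t) *\<^sub>R r k + t *\<^sub>R r (k + 1)"
proof -
  have "\<lfloor>of_int k + t\<rfloor> = k"
    using assms by (simp add: floor_unique)
  then show ?thesis
    unfolding interp_def by simp
qed

lemma ellipse_orbit_closed:
  fixes p l :: int
  assumes "det2 P Q \<noteq> 0" "0 < p" "coprime p l"
    and rk: "\<And>k. r k = C + ellipse_point P Q (of_int k * (2 * of_int l * pi / of_int p))"
  shows "closed_with_period r p"
proof -
  let ?\<theta> = "2 * of_int l * pi / of_int p"
  have "r (k + p) = r k" for k
  proof -
    have "of_int (k + p) * ?\<theta> = of_int k * ?\<theta> + 2 * pi * of_int l"
      using assms(2) by (simp add: field_simps)
    then show ?thesis
      unfolding rk by (simp add: ellipse_point_periodic)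
  qed
  moreover have "\<not> (\<forall>k. r (k + q) = r k)" if "0 < q" "q < p" for q
  proof
    assume "\<forall>k. r (k + q) = r k"
    then have "ellipse_point P Q (of_int q * ?\<theta>) = ellipse_point P Q 0"
      using rk[of q] rk[of 0] by (metis add.left_neutral add_left_cancel mult_zero_left of_int_0)
    then have "cos (of_int q * ?\<theta>) = 1"
      by (rule ellipse_point_eq_start[OF assms(1)])
    then obtain n :: int where "of_int q * ?\<theta> = of_int n * 2 * pi"
      by (auto simp: cos_one_2pi_int)
    then have "real_of_int (q * l) = of_int (n * p)"
      using assms(2) by (simp add: field_simps)
    then have "p dvd q * l"
      by (metis dvd_triv_right of_int_eq_iff)
    with assms(3) have "p dvd q"
      using coprime_dvd_mult_left_iff by blast
    with that show False
      using zdvd_imp_le by fastforce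
  qed
  ultimately show ?thesis
    unfolding closed_with_period_def using assms(2) by blast
qed

lemma crossing_edges_not_simple:
  assumes "1 \<le> j" "j < p" "0 < t" "t < 1" "0 < s" "s < 1"
    and "(1 - t) *\<^sub>R r 0 + t *\<^sub>R r 1 = (1 - s) *\<^sub>R r j + s *\<^sub>R r (j + 1)"
  shows "\<not> simple_closed r p"
proof
  assume "simple_closed r p"
  then have inj: "inj_on (interp r) {of_int 0 ..< of_int (0 + p)}"
    unfolding simple_closed_def by blast
  have "interp r (of_int 0 + t) = interp r (of_int j + s)"
    using assms interp_of_int_add[of t r 0] interp_of_int_add[of s r j] by simp
  moreover have "of_int 0 + t \<in> {of_int 0 ..< of_int (0 + p)}" "of_int j + s \<in> {of_int 0 ..< of_int (0 + p)}"
    using assms(1-6) by auto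
  ultimately have "of_int 0 + t = of_int j + s"
    by (rule inj_onD[OF inj])
  then show False
    using assms(1,4,5) by linarith
qed

lemma multiple_between:
  fixes p l :: int
  assumes "2 \<le> l" "2 * l < p" "\<not> l dvd p"
  obtains j where "1 \<le> j" "j < p" "p < j * l" "j * l < p + l"
proof
  let ?j = "p div l + 1"
  have "0 < p mod l" "p mod l < l"
    using assms by (simp_all add: dvd_eq_mod_eq_0 order_le_neq_trans)
  moreover have "?j * l = p + (l - p mod l)"
    using div_mult_mod_eq[of p l] by (simp add: algebra_simps)
  ultimately show "p < ?j * l" "?j * l < p + l"
    by simp_all
  have "0 \<le> p div l"
    using assms(1,2) by (simp add: pos_imp_zdiv_nonneg_iff)
  moreover from this have "2 * (p div l) \<le> l * (p div l)"
    using assms(1) by (simp add: mult_right_mono)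
  moreover have "l * (p div l) \<le> p"
    using minus_mod_eq_mult_div[of p l] \<open>0 < p mod l\<close> by linarith
  ultimately show "1 \<le> ?j" "?j < p"
    using assms(1,2) by linarith+
qed

text \<open>The vertices sit at angles \<open>k l \<alpha>\<close> with \<open>\<alpha> = 2\<pi>/p\<close>. The first vertex \<open>j\<close> to wind
  past the start has \<open>j l = p + x\<close> with \<open>0 < x < l\<close>, so the edge from \<open>j\<close> has endpoints at
  angles \<open>x \<alpha>\<close> and \<open>(x + l) \<alpha>\<close> modulo \<open>2\<pi>\<close>; these interleave with the angles \<open>0\<close> and \<open>l \<alpha>\<close>
  of the first edge.\<close>
lemma star_polygon_not_simple:
  fixes p l :: int
  assumes "det2 P Q \<noteq> 0" "2 \<le> l" "2 * l < p" "coprime p l"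
    and rk: "\<And>k. r k = C + ellipse_point P Q (of_int k * (2 * of_int l * pi / of_int p))"
  shows "\<not> simple_closed r p"
proof -
  have "\<not> l dvd p"
    using assms(2,4) coprime_common_divisor[of p l l] by auto
  with assms(2,3) obtain j where j: "1 \<le> j" "j < p" "p < j * l" "j * l < p + l"
    by (rule multiple_between)
  define x where "x = j * l - p"
  define \<alpha> where "\<alpha> = 2 * pi / of_int p"
  have "0 < \<alpha>" "of_int p * \<alpha> = 2 * pi"
    unfolding \<alpha>_def using assms(2,3) by auto
  have angle: "of_int k * (2 * of_int l * pi / of_int p) = of_int (k * l) * \<alpha>" for k
    unfolding \<alpha>_def by simp
  have "of_int (j * l) * \<alpha> = of_int x * \<alpha> + 2 * pi * of_int 1"
    "of_int ((j + 1) * l) * \<alpha> = of_int (x + l) * \<alpha> + 2 * pi * of_int 1"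
    using \<open>of_int p * \<alpha> = 2 * pi\<close> unfolding x_def by (simp_all add: algebra_simps)
  then have "r 0 = C + ellipse_point P Q 0" "r 1 = C + ellipse_point P Q (of_int l * \<alpha>)"
    "r j = C + ellipse_point P Q (of_int x * \<alpha>)"
    "r (j + 1) = C + ellipse_point P Q (of_int (x + l) * \<alpha>)"
    using rk[of 0] rk[of 1] rk[of j] rk[of "j + 1"] unfolding angle
    by (simp_all only: ellipse_point_periodic) simp_all
  moreover obtain t s where "0 < t" "t < 1" "0 < s" "s < 1"
    "(1 - t) *\<^sub>R ellipse_point P Q 0 + t *\<^sub>R ellipse_point P Q (of_int l * \<alpha>)
       = (1 - s) *\<^sub>R ellipse_point P Q (of_int x * \<alpha>) + s *\<^sub>R ellipse_point P Q (of_int (x + l) * \<alpha>)"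
  proof (rule ellipse_chords_cross[OF assms(1)])
    have "0 < x" "x < l" "x + l < p"
      unfolding x_def using j assms(3) by linarith+
    then show "0 < of_int x * \<alpha>" "of_int x * \<alpha> < of_int l * \<alpha>" "of_int l * \<alpha> < of_int (x + l) * \<alpha>"
      "of_int (x + l) * \<alpha> < 0 + 2 * pi"
      using \<open>0 < \<alpha>\<close> \<open>of_int p * \<alpha> = 2 * pi\<close> mult_strict_right_mono[of "x + l" p \<alpha>] by simp_all
  qed
  ultimately have "(1 - t) *\<^sub>R r 0 + t *\<^sub>R r 1 = (1 - s) *\<^sub>R r j + s *\<^sub>R r (j + 1)"
    by (simp add: algebra_simps)
  then show ?thesis
    using crossing_edges_not_simple j(1,2) \<open>0 < t\<close> \<open>t < 1\<close> \<open>0 < s\<close> \<open>s < 1\<close> by blast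
qed

theorem proposition3p13:
  fixes p l :: int and r :: "int \<Rightarrow> real \<times> real"
  assumes "2 \<le> l" and "2 * l < p" and "gcd p l = 1"
    and "nondegenerate r"
    and "\<forall>k. kappa r k = 1"
    and "\<forall>k. kappa_bar r k = 2 * cos (2 * of_int l * pi / of_int p)"
  shows "closed_with_period r p \<and> \<not> simple_closed r p"
proof -
  let ?\<theta> = "2 * of_int l * pi / of_int p"
  have "0 < ?\<theta>" "?\<theta> < pi"
    using assms(1,2) by (simp_all add: divide_simps)
  then have "sin ?\<theta> \<noteq> 0"
    using sin_gt_zero by fastforce
  then obtain C P Q where PQ: "det2 P Q \<noteq> 0" and rk: "\<And>k. r k = C + ellipse_point P Q (of_int k * ?\<theta>)"
    using constant_curvatures_ellipse[OF assms(4)] assms(5,6) by metis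
  have "coprime p l" "0 < p"
    using assms(1-3) by (simp_all add: coprime_iff_gcd_eq_1)
  then show ?thesis
    using ellipse_orbit_closed[OF PQ _ _ rk] star_polygon_not_simple[OF PQ assms(1,2) _ rk] by blast
qed

end
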